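(* Let $X$ be an ordered Hausdorff space. Then $nw(Q_{P}(X)) = w(Q_{P}(X)) = |X|$.
   Context: An ordered Hausdorff space is a set carrying a linear order, equipped with its order topology, which is Hausdorff. A function $f\colon X\to Y$ between topological spaces is quasi-continuous at $x\in X$ if for every open $U\ni x$ and every open $V\ni f(x)$ there is a non-empty open $G\subseteq U$ with $f(G)\subseteq V$; $f$ is quasi-continuous if it is quasi-continuous at every point. $Q_{P}(X)$ is the set of all quasi-continuous functions $X\to\mathbb{R}$ with the topology of point-wise convergence, i.e. the subspace topology from $\mathbb{R}^{X}$; basic open sets are $\{g : g(x_i)\in U_i,\ 1\le i\le n\}$ with $x_i\in X$ and $U_i$ open in $\mathbb{R}$. For a space $Z$: $w(Z)=\aleph_0+\min\{|\mathcal{B}| : \mathcal{B}\text{ a base of }Z\}$; $nw(Z)=\aleph_0+\min\{|\mathcal{N}| : \mathcal{N}\text{ a network of }Z\}$, where a network is a family $\mathcal{N}$ of subsets of $Z$ such that for every $z\in Z$ and every open $U\ni z$ there is $N\in\mathcal{N}$ with $z\in N\subseteq U$. $|X|$ is the cardinality of $X$. *)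

theory Defs
  imports "HOL-Analysis.Analysis"
begin

definition quasi_continuous :: "('a::topological_space \<Rightarrow> real) \<Rightarrow> bool" where
  "quasi_continuous f \<longleftrightarrow>
     (\<forall>x U V. open U \<and> x \<in> U \<and> open V \<and> f x \<in> V \<longrightarrow>
        (\<exists>G. open G \<and> G \<noteq> {} \<and> G \<subseteq> U \<and> f ` G \<subseteq> V))"

definition QP :: "('a::topological_space \<Rightarrow> real) topology" where
  "QP = subtopology (product_topology (\<lambda>_. euclideanreal) UNIV) {f. quasi_continuous f}"

definition is_base :: "'a topology \<Rightarrow> 'a set set \<Rightarrow> bool" where
  "is_base Z B \<longleftrightarrow> (\<forall>b\<in>B. openin Z b) \<and>
     (\<forall>U. openin Z U \<longrightarrow> (\<forall>z\<in>U. \<exists>b\<in>B. z \<in> b \<and> b \<subseteq> U))"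

definition is_network :: "'a topology \<Rightarrow> 'a set set \<Rightarrow> bool" where
  "is_network Z N \<longleftrightarrow> (\<forall>n\<in>N. n \<subseteq> topspace Z) \<and>
     (\<forall>U. openin Z U \<longrightarrow> (\<forall>z\<in>U. \<exists>n\<in>N. z \<in> n \<and> n \<subseteq> U))"

text \<open>w(Z) = aleph_0 + min |B| over bases; nw(Z) likewise over networks (cardinals as in BNF).\<close>
definition weight :: "'a topology \<Rightarrow> ('a set + nat) rel" where
  "weight Z = BNF_Cardinal_Arithmetic.csum (card_of (SOME B. is_base Z B \<and> (\<forall>B'. is_base Z B' \<longrightarrow> (card_of B, card_of B') \<in> ordLeq))) natLeq"

definition netweight :: "'a topology \<Rightarrow> ('a set + nat) rel" where
  "netweight Z = BNF_Cardinal_Arithmetic.csum (card_of (SOME N. is_network Z N \<and> (\<forall>N'. is_network Z N' \<longrightarrow> (card_of N, card_of N') \<in> ordLeq))) natLeq"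

end

(*
  Q_P(X) is a subspace of the product R^X, and the cylinders over finitely many points of X
  with sides taken from a countable base of R form a base of the product of size |X|;
  hence nw <= w <= |X|.

  Conversely, every non-maximal x carries a quasi-continuous 0-1 step function f_x: the
  indicator of (<-, x], which is clopen when x has an immediate successor s(x), and otherwise
  the indicator of [x, ->), which is quasi-continuous at x because every right neighbourhood
  [x, b) of x contains the nonempty open interval (x, b). Its basic neighbourhood
  W_x = {g. g x > 1/2}, cut down by g (s x) < 1/2 in the first case, has the property that
  f_y \<in> W_x and f_x \<in> W_y force x = y. So choosing for each x a network element between f_x
  and W_x is injective, and every network has at least |X| elements.
*)
theory Submission
  imports
    Defs
    "HOL-Algebra.Free_Abelian_Groups" (* for the cardinal arithmetic of HOL-Cardinals *)
begin

unbundle cardinal_syntax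

lemma some_card_minimal:
  assumes "P B0"
  defines "M \<equiv> SOME B. P B \<and> (\<forall>B'. P B' \<longrightarrow> card_of B \<le>o card_of B')"
  shows "P M" and "\<And>B. P B \<Longrightarrow> |M| \<le>o |B|"
proof -
  have "\<exists>r \<in> card_of ` {B. P B}. \<forall>r' \<in> card_of ` {B. P B}. r \<le>o r'"
    by (rule exists_minim_Well_order) (use assms card_of_Well_order in auto)
  then have "\<exists>B. P B \<and> (\<forall>B'. P B' \<longrightarrow> card_of B \<le>o card_of B')"
    by auto
  then have "P M \<and> (\<forall>B'. P B' \<longrightarrow> card_of M \<le>o card_of B')"
    unfolding M_def by (rule someI_ex)
  then show "P M" and "\<And>B. P B \<Longrightarrow> |M| \<le>o |B|"
    by auto
qed

lemma some_card_minimal_csum_natLeq: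
  assumes "P B0" "|B0| \<le>o |A|" "\<And>B. P B \<Longrightarrow> |A| \<le>o |B|" "infinite A"
  shows "card_of (SOME B. P B \<and> (\<forall>B'. P B' \<longrightarrow> card_of B \<le>o card_of B')) +c natLeq =o |A|"
proof -
  define M where "M = (SOME B. P B \<and> (\<forall>B'. P B' \<longrightarrow> card_of B \<le>o card_of B'))"
  have "P M" and M_le: "\<And>B. P B \<Longrightarrow> |M| \<le>o |B|"
    using some_card_minimal[of P, OF assms(1)] unfolding M_def by blast+
  have "|M| =o |A|"
    using ordLeq_transitive[OF M_le[OF assms(1)] assms(2)] assms(3)[OF \<open>P M\<close>]
    by (simp add: ordIso_iff_ordLeq)
  then have "infinite M"
    using card_of_ordIso_finite assms(4) by blast
  then have "|M| +c natLeq =o |M|"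
    using infinite_iff_natLeq_ordLeq[of M]
    by (intro csum_absorb1) (auto simp: cinfinite_def Field_card_of card_of_card_order_on)
  then show ?thesis
    using \<open>|M| =o |A|\<close> unfolding M_def by (rule ordIso_transitive)
qed

lemma base_imp_network: "is_base Z B \<Longrightarrow> is_network Z B"
  unfolding is_base_def is_network_def using openin_subset by blast

lemma weight_netweight_ordIso_card:
  assumes "is_base Z B" "|B| \<le>o |A|" "\<And>N. is_network Z N \<Longrightarrow> |A| \<le>o |N|" "infinite A"
  shows "weight Z =o |A|" and "netweight Z =o |A|"
  unfolding weight_def netweight_def
  using assms base_imp_network by (blast intro: some_card_minimal_csum_natLeq)+

definition cylinder :: "('i \<times> 'b set) set \<Rightarrow> ('i \<Rightarrow> 'b) set" where
  "cylinder F = {g. \<forall>(i, V)\<in>F. g i \<in> V}"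

lemma openin_product_topology_eval:
  "open V \<Longrightarrow> openin (product_topology (\<lambda>_. euclidean) UNIV) {g. g i \<in> V}"
  using openin_continuous_map_preimage[OF continuous_map_product_projection[of i UNIV "\<lambda>_. euclidean"]]
  by simp

lemma openin_cylinder:
  assumes "finite F" "\<And>i V. (i, V) \<in> F \<Longrightarrow> open V"
  shows "openin (product_topology (\<lambda>_. euclidean) UNIV) (cylinder F)"
proof -
  have "cylinder F = (\<Inter>(i, V)\<in>F. {g. g i \<in> V}) \<inter> topspace (product_topology (\<lambda>_. euclidean) UNIV)"
    by (auto simp: cylinder_def)
  also have "openin (product_topology (\<lambda>_. euclidean) UNIV) \<dots>"
    using assms by (intro openin_INT) (auto intro: openin_product_topology_eval)
  finally show ?thesis .
qed

lemma is_base_cylinders: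
  fixes \<B> :: "'b::topological_space set set"
  assumes basis: "topological_basis \<B>"
  shows "is_base (product_topology (\<lambda>_. euclidean) (UNIV :: 'i set)) (cylinder ` Fpow (UNIV \<times> \<B>))"
  unfolding is_base_def
proof (intro conjI ballI allI impI)
  fix b assume "b \<in> cylinder ` Fpow (UNIV \<times> \<B>)"
  then show "openin (product_topology (\<lambda>_. euclidean) UNIV) b"
    using topological_basis_open[OF basis] by (auto simp: Fpow_def intro!: openin_cylinder)
next
  fix T and z :: "'i \<Rightarrow> 'b"
  assume "openin (product_topology (\<lambda>_. euclidean) UNIV) T" "z \<in> T"
  then obtain W where W: "finite {i. W i \<noteq> UNIV}" "\<And>i. open (W i)"
    "z \<in> Pi\<^sub>E UNIV W" "Pi\<^sub>E UNIV W \<subseteq> T"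
    unfolding openin_product_topology_alt by auto
  have "\<exists>C\<in>\<B>. z i \<in> C \<and> C \<subseteq> W i" for i
  proof -
    have "z i \<in> W i"
      using W(3) by (simp add: PiE_iff)
    then show ?thesis
      by (rule topological_basisE[OF basis W(2)]) blast
  qed
  then obtain C where C: "\<And>i. C i \<in> \<B>" "\<And>i. z i \<in> C i" "\<And>i. C i \<subseteq> W i"
    by metis
  define F where "F = (\<lambda>i. (i, C i)) ` {i. W i \<noteq> UNIV}"
  have "F \<in> Fpow (UNIV \<times> \<B>)"
    using W(1) C(1) by (auto simp: F_def Fpow_def)
  moreover have "z \<in> cylinder F"
    using C(2) by (auto simp: F_def cylinder_def)
  moreover have "cylinder F \<subseteq> T"
  proof
    fix g assume g: "g \<in> cylinder F"
    have "g i \<in> W i" for i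
    proof (cases "W i = UNIV")
      case False
      then have "(i, C i) \<in> F"
        by (simp add: F_def)
      then have "g i \<in> C i"
        using g unfolding cylinder_def by blast
      then show ?thesis
        using C(3) by blast
    qed simp
    then show "g \<in> T"
      using W(4) by (auto simp: PiE_UNIV_domain)
  qed
  ultimately show "\<exists>b\<in>cylinder ` Fpow (UNIV \<times> \<B>). z \<in> b \<and> b \<subseteq> T"
    by (intro bexI) (auto intro: imageI)
qed

lemma card_of_Fpow_Times_countable:
  assumes "infinite A" "countable C"
  shows "|Fpow (A \<times> C)| \<le>o |A|"
proof -
  have "|C| \<le>o |UNIV :: nat set|"
    using assms(2) card_of_ordLeq[of C "UNIV :: nat set"] unfolding countable_def by blast
  also have "|UNIV :: nat set| \<le>o |A|"
    using assms(1) infinite_iff_card_of_nat by blast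
  finally have "|A \<times> C| \<le>o |A \<times> A|"
    by (rule card_of_Times_mono2)
  also have "|A \<times> A| =o |A|"
    using assms(1) by (rule card_of_Times_same_infinite)
  finally have "|Fpow (A \<times> C)| \<le>o |Fpow A|"
    by (rule card_of_Fpow_mono)
  also have "|Fpow A| =o |A|"
    using assms(1) by (rule card_of_Fpow_infinite)
  finally show ?thesis .
qed

lemma is_base_subtopology:
  assumes "is_base Z B"
  shows "is_base (subtopology Z S) ((\<lambda>b. b \<inter> S) ` B)"
  unfolding is_base_def
proof (intro conjI ballI allI impI)
  fix c assume "c \<in> (\<lambda>b. b \<inter> S) ` B"
  then obtain b where "b \<in> B" "c = b \<inter> S"
    by blast
  then show "openin (subtopology Z S) c"
    using assms unfolding is_base_def by (simp add: openin_subtopology_Int)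
next
  fix U z assume "openin (subtopology Z S) U" "z \<in> U"
  then obtain T where T: "openin Z T" "U = T \<inter> S"
    unfolding openin_subtopology by blast
  then obtain b where "b \<in> B" "z \<in> b" "b \<subseteq> T"
    using assms \<open>z \<in> U\<close> unfolding is_base_def by blast
  then have "b \<inter> S \<in> (\<lambda>b. b \<inter> S) ` B" "z \<in> b \<inter> S" "b \<inter> S \<subseteq> U"
    using T(2) \<open>z \<in> U\<close> by auto
  then show "\<exists>c\<in>(\<lambda>b. b \<inter> S) ` B. z \<in> c \<and> c \<subseteq> U"
    by blast
qed

lemma QP_base_card_le:
  assumes "infinite (UNIV :: 'a set)"
  shows "\<exists>B. is_base (QP :: ('a::topological_space \<Rightarrow> real) topology) B \<and> |B| \<le>o |UNIV :: 'a set|"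
proof -
  obtain \<B> :: "real set set" where "countable \<B>" "topological_basis \<B>"
    using ex_countable_basis by blast
  let ?B = "(\<lambda>b. b \<inter> {f. quasi_continuous f}) ` cylinder ` Fpow ((UNIV :: 'a set) \<times> \<B>)"
  have "is_base QP ?B"
    unfolding QP_def by (intro is_base_subtopology is_base_cylinders) fact
  moreover have "|?B| \<le>o |UNIV :: 'a set|"
  proof -
    have "|?B| \<le>o |cylinder ` Fpow ((UNIV :: 'a set) \<times> \<B>)|"
      by (rule card_of_image)
    also have "|cylinder ` Fpow ((UNIV :: 'a set) \<times> \<B>)| \<le>o |Fpow ((UNIV :: 'a set) \<times> \<B>)|"
      by (rule card_of_image)
    also have "|Fpow ((UNIV :: 'a set) \<times> \<B>)| \<le>o |UNIV :: 'a set|"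
      using assms \<open>countable \<B>\<close> by (rule card_of_Fpow_Times_countable)
    finally show ?thesis .
  qed
  ultimately show ?thesis by blast
qed

lemma network_card_ge_separated:
  assumes "is_network Z N"
    and "\<And>x. x \<in> D \<Longrightarrow> openin Z (W x)" "\<And>x. x \<in> D \<Longrightarrow> p x \<in> W x"
    and "\<And>x y. \<lbrakk>x \<in> D; y \<in> D; p y \<in> W x; p x \<in> W y\<rbrakk> \<Longrightarrow> x = y"
  shows "|D| \<le>o |N|"
proof -
  have "\<exists>n. n \<in> N \<and> p x \<in> n \<and> n \<subseteq> W x" if "x \<in> D" for x
  proof -
    have "\<forall>z\<in>W x. \<exists>n\<in>N. z \<in> n \<and> n \<subseteq> W x"
      using assms(1) assms(2)[OF that] unfolding is_network_def by blast
    then show ?thesis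
      using assms(3)[OF that] by blast
  qed
  then have "\<forall>x\<in>D. \<exists>n. n \<in> N \<and> p x \<in> n \<and> n \<subseteq> W x"
    by blast
  from bchoice[OF this] obtain \<phi> where \<phi>: "\<forall>x\<in>D. \<phi> x \<in> N \<and> p x \<in> \<phi> x \<and> \<phi> x \<subseteq> W x"
    by blast
  have "inj_on \<phi> D"
  proof (rule inj_onI)
    fix x y assume "x \<in> D" "y \<in> D" "\<phi> x = \<phi> y"
    then have "p y \<in> W x" and "p x \<in> W y"
      using \<phi> by blast+
    with \<open>x \<in> D\<close> \<open>y \<in> D\<close> show "x = y"
      by (rule assms(4))
  qed
  then show ?thesis
    by (rule card_of_ordLeqI) (use \<phi> in blast)
qed

definition has_successor :: "'a::linorder \<Rightarrow> bool" where
  "has_successor x \<longleftrightarrow> (\<exists>s>x. {x<..<s} = {})"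

definition successor :: "'a::linorder \<Rightarrow> 'a" where
  "successor x = (SOME s. x < s \<and> {x<..<s} = {})"

lemma
  assumes "has_successor x"
  shows less_successor: "x < successor x"
    and greaterThanLessThan_successor: "{x<..<successor x} = {}"
proof -
  have "x < successor x \<and> {x<..<successor x} = {}"
    using assms unfolding has_successor_def successor_def by (rule someI_ex)
  then show "x < successor x" and "{x<..<successor x} = {}"
    by blast+
qed

lemma less_iff_successor_le:
  assumes "has_successor x"
  shows "x < y \<longleftrightarrow> successor x \<le> y"
proof
  assume "x < y"
  show "successor x \<le> y"
  proof (rule ccontr)
    assume "\<not> successor x \<le> y"
    then have "y \<in> {x<..<successor x}"
      using \<open>x < y\<close> by simp
    then show False
      using greaterThanLessThan_successor[OF assms] by blast
  qed
next
  assume "successor x \<le> y"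
  then show "x < y"
    using less_successor[OF assms] by (rule order.strict_trans2[rotated])
qed

definition quasi_continuous_at :: "('a::topological_space \<Rightarrow> real) \<Rightarrow> 'a \<Rightarrow> bool" where
  "quasi_continuous_at f x \<longleftrightarrow>
     (\<forall>U V. open U \<and> x \<in> U \<and> open V \<and> f x \<in> V \<longrightarrow>
        (\<exists>G. open G \<and> G \<noteq> {} \<and> G \<subseteq> U \<and> f ` G \<subseteq> V))"

lemma quasi_continuous_iff_at: "quasi_continuous f \<longleftrightarrow> (\<forall>x. quasi_continuous_at f x)"
  unfolding quasi_continuous_def quasi_continuous_at_def by (rule refl)

lemma quasi_continuous_at_locally_constant:
  assumes "open W" "x \<in> W" "\<And>y. y \<in> W \<Longrightarrow> f y = f x"
  shows "quasi_continuous_at f x"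
  unfolding quasi_continuous_at_def
proof (intro allI impI)
  fix U V assume UV: "open U \<and> x \<in> U \<and> open V \<and> f x \<in> V"
  have "f y \<in> V" if "y \<in> U \<inter> W" for y
    using UV assms(3) that by (metis IntD2)
  then show "\<exists>G. open G \<and> G \<noteq> {} \<and> G \<subseteq> U \<and> f ` G \<subseteq> V"
    using UV assms(1,2) by (intro exI[of _ "U \<inter> W"] conjI) auto
qed

lemma quasi_continuous_indicator_clopen:
  assumes "open A" "closed A"
  shows "quasi_continuous (indicator A :: 'a::topological_space \<Rightarrow> real)"
  unfolding quasi_continuous_iff_at
proof
  fix x show "quasi_continuous_at (indicator A) x"
  proof (cases "x \<in> A")
    case True
    show ?thesis
      by (rule quasi_continuous_at_locally_constant[of A]) (use True assms(1) in simp_all)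
  next
    case False
    show ?thesis
      by (rule quasi_continuous_at_locally_constant[of "- A"])
        (use False assms(2) in \<open>simp_all add: open_Compl\<close>)
  qed
qed

lemma quasi_continuous_indicator_atLeast:
  fixes x :: "'a::linorder_topology"
  assumes "\<not> has_successor x" "x < y"
  shows "quasi_continuous (indicator {x..} :: 'a \<Rightarrow> real)"
  unfolding quasi_continuous_iff_at
proof
  fix z :: 'a
  consider "z < x" | "x < z" | "z = x"
    using less_linear by blast
  then show "quasi_continuous_at (indicator {x..}) z"
  proof cases
    case 1
    show ?thesis
      by (rule quasi_continuous_at_locally_constant[of "{..<x}"]) (use 1 in simp_all)
  next
    case 2
    show ?thesis
      by (rule quasi_continuous_at_locally_constant[of "{x<..}"]) (use 2 in simp_all)
  next
    case 3
    show ?thesis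
      unfolding quasi_continuous_at_def
    proof (intro allI impI)
      fix U V assume UV: "open U \<and> z \<in> U \<and> open V \<and> indicator {x..} z \<in> V"
      then obtain b where "x < b" "{x..<b} \<subseteq> U"
        using open_right[of U x y] assms(2) 3 by blast
      have "{x<..<b} \<subseteq> {x..<b}"
        by auto
      then have "{x<..<b} \<subseteq> U"
        using \<open>{x..<b} \<subseteq> U\<close> by (rule subset_trans)
      moreover have "{x<..<b} \<noteq> {}"
        using assms(1) \<open>x < b\<close> unfolding has_successor_def by blast
      moreover have "indicator {x..} ` {x<..<b} \<subseteq> V"
        using UV 3 by auto
      ultimately show "\<exists>G. open G \<and> G \<noteq> {} \<and> G \<subseteq> U \<and> indicator {x..} ` G \<subseteq> V"
        by (intro exI[of _ "{x<..<b}"]) simp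
    qed
  qed
qed

definition step_fun :: "'a::linorder \<Rightarrow> 'a \<Rightarrow> real" where
  "step_fun x = (if has_successor x then indicator {..x} else indicator {x..})"

definition step_nbhd :: "'a::linorder \<Rightarrow> ('a \<Rightarrow> real) set" where
  "step_nbhd x = cylinder
     (if has_successor x then {(x, {1/2<..}), (successor x, {..<1/2})} else {(x, {1/2<..})})"

lemma quasi_continuous_step_fun:
  fixes x :: "'a::linorder_topology"
  assumes "x < y"
  shows "quasi_continuous (step_fun x)"
proof (cases "has_successor x")
  case True
  then have "z \<le> x \<longleftrightarrow> z < successor x" for z
    using less_iff_successor_le[OF True, of z] by (metis not_le)
  then have "{..x} = {..<successor x}"
    by auto
  then have "open {..x}"
    by simp
  then show ?thesis
    using True by (simp add: step_fun_def quasi_continuous_indicator_clopen)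
next
  case False
  then show ?thesis
    using assms by (simp add: step_fun_def quasi_continuous_indicator_atLeast)
qed

lemma step_fun_mem_step_nbhd: "step_fun x \<in> step_nbhd x"
  using less_successor[of x] by (auto simp: step_fun_def step_nbhd_def cylinder_def)

lemma openin_step_nbhd: "openin (product_topology (\<lambda>_. euclideanreal) UNIV) (step_nbhd x)"
  unfolding step_nbhd_def by (rule openin_cylinder) (auto split: if_splits)

lemma step_nbhd_separating:
  fixes x y :: "'a::linorder"
  assumes "x < y" "step_fun y \<in> step_nbhd x" "step_fun x \<in> step_nbhd y"
  shows False
proof (cases "has_successor x")
  case True
  have "step_fun y x > 1/2" and "step_fun y (successor x) < 1/2"
    using assms(2) True by (simp_all add: step_nbhd_def cylinder_def)
  moreover have "successor x \<le> y"
    using assms(1) less_iff_successor_le[OF True] by blast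
  ultimately show False
    using assms(1) by (cases "has_successor y") (simp_all add: step_fun_def)
next
  case False
  have "step_fun y x > 1/2"
    using assms(2) False by (simp add: step_nbhd_def cylinder_def)
  then have "has_successor y"
    using assms(1) by (cases "has_successor y") (simp_all add: step_fun_def)
  then have "step_fun x (successor y) < 1/2"
    using assms(3) by (simp add: step_nbhd_def cylinder_def)
  moreover have "x < successor y"
    using assms(1) less_successor[OF \<open>has_successor y\<close>] by (rule less_trans)
  ultimately show False
    using False by (simp add: step_fun_def)
qed

lemma QP_network_card_ge:
  assumes "infinite (UNIV :: 'a::linorder_topology set)"
    and "is_network (QP :: ('a \<Rightarrow> real) topology) N"
  shows "|UNIV :: 'a set| \<le>o |N|"
proof -
  define D where "D = {x :: 'a. \<exists>y. x < y}"
  have "|D| \<le>o |N|"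
  proof (rule network_card_ge_separated[of "QP :: ('a \<Rightarrow> real) topology" N D
        "\<lambda>x. step_nbhd x \<inter> {f. quasi_continuous f}" step_fun])
    show "is_network QP N"
      by (fact assms(2))
  next
    fix x assume "x \<in> D"
    then show "openin QP (step_nbhd x \<inter> {f. quasi_continuous f})"
      unfolding QP_def openin_subtopology using openin_step_nbhd by blast
    show "step_fun x \<in> step_nbhd x \<inter> {f. quasi_continuous f}"
      using \<open>x \<in> D\<close> step_fun_mem_step_nbhd quasi_continuous_step_fun by (auto simp: D_def)
  next
    fix x y
    assume "step_fun y \<in> step_nbhd x \<inter> {f. quasi_continuous f}"
      and "step_fun x \<in> step_nbhd y \<inter> {f. quasi_continuous f}"
    then show "x = y"
      by (cases x y rule: linorder_cases) (use step_nbhd_separating in blast)+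
  qed
  moreover have "UNIV - {GREATEST x. True} \<subseteq> D"
  proof
    fix x :: 'a assume "x \<in> UNIV - {GREATEST x. True}"
    moreover have "(GREATEST x. True) = x" if "x \<notin> D"
      using that by (intro Greatest_equality) (auto simp: D_def not_less)
    ultimately show "x \<in> D"
      by blast
  qed
  then have "|UNIV :: 'a set| \<le>o |D|"
    by (rule ordIso_ordLeq_trans[OF ordIso_symmetric[OF infinite_card_of_diff_singl[OF assms(1)]]
          card_of_mono1])
  ultimately show ?thesis
    using ordLeq_transitive by blast
qed

theorem mainTheorem1:
  assumes "infinite (UNIV :: 'a::linorder_topology set)"
  shows "(netweight (QP :: ('a \<Rightarrow> real) topology), weight (QP :: ('a \<Rightarrow> real) topology)) \<in> ordIso
         \<and> (weight (QP :: ('a \<Rightarrow> real) topology), card_of (UNIV :: 'a set)) \<in> ordIso"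
proof -
  obtain B where "is_base (QP :: ('a \<Rightarrow> real) topology) B" "|B| \<le>o |UNIV :: 'a set|"
    using QP_base_card_le[OF assms] by blast
  note cardinalities = weight_netweight_ordIso_card[OF this QP_network_card_ge[OF assms] assms]
  show ?thesis
    using ordIso_transitive[OF cardinalities(2) ordIso_symmetric[OF cardinalities(1)]] cardinalities(1)
    by blast
qed

end
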